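(* Suppose that $D:=\sum_{j=0}^\infty\delta^+(j)<\infty$. Then for every $i\in\mathbb Z_+$, $$\mathbb E_i\exp\Big(\sum_{j=0}^\infty\delta^+(j)\ell(j)\Big)\le\sup_{j\in\mathbb Z_+}\mathbb E_i e^{D\ell(j)}\le\infty;$$ in particular, whenever the right-hand side is finite for every $i$, condition (C) holds and $f(i)\le\sup_{j}\mathbb E_i e^{D\ell(j)}$. If in addition, for every fixed $N\in\mathbb Z_+$, $\mathbb P_i\{X_n>N\text{ for all }n\ge0\}\to1$ as $i\to\infty$, and $\sup_{i\in\mathbb Z_+}\mathbb E_i e^{D\ell(i)}<\infty$, then $\limsup_{i\to\infty}f(i)\le1$.
   Context: Let $\mathbb Z_+=\{0,1,2,\dots\}$. Let $Q$ be a nonnegative transition kernel on $\mathbb Z_+$: $Q(i,j)\ge 0$ and $0<Q(i,\mathbb Z_+):=\sum_{j\ge0}Q(i,j)<\infty$ for every $i$, and $Q$ is irreducible. Let $P(i,j):=Q(i,j)/Q(i,\mathbb Z_+)$ and let $(X_n)_{n\ge0}$ be a Markov chain on $\mathbb Z_+$ with transition matrix $P$; $\mathbb P_i,\mathbb E_i$ denote probability and expectation given $X_0=i$. Let $\delta(j):=\log Q(j,\mathbb Z_+)$, $\delta^+:=\max(\delta,0)$. The local time at $j$ is $\ell(j):=\sum_{n=0}^\infty\mathbf 1\{X_n=j\}$. Condition (C): for every $i$, $\mathbb E_i\prod_{n=0}^\infty \max(Q(X_n,\mathbb Z_+),1)<\infty$ (equivalently $\mathbb E_i\exp(\sum_n\delta^+(X_n))<\infty$).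 Under (C) define $f(i):=\mathbb E_i\prod_{n=0}^\infty Q(X_n,\mathbb Z_+)\in[0,\infty)$. *)

theory Defs
  imports "HOL-Probability.Probability"
begin

definition Qtot :: "(nat \<Rightarrow> nat \<Rightarrow> real) \<Rightarrow> nat \<Rightarrow> real" where
  "Qtot Q i = (\<Sum>j. Q i j)"

definition Pker :: "(nat \<Rightarrow> nat \<Rightarrow> real) \<Rightarrow> nat \<Rightarrow> nat \<Rightarrow> real" where
  "Pker Q i j = Q i j / Qtot Q i"

definition delta :: "(nat \<Rightarrow> nat \<Rightarrow> real) \<Rightarrow> nat \<Rightarrow> real" where
  "delta Q j = ln (Qtot Q j)"

definition delta_plus :: "(nat \<Rightarrow> nat \<Rightarrow> real) \<Rightarrow> nat \<Rightarrow> real" where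
  "delta_plus Q j = max (delta Q j) 0"

definition nonneg_kernel :: "(nat \<Rightarrow> nat \<Rightarrow> real) \<Rightarrow> bool" where
  "nonneg_kernel Q \<longleftrightarrow>
     (\<forall>i j. 0 \<le> Q i j) \<and> (\<forall>i. summable (Q i)) \<and> (\<forall>i. 0 < Qtot Q i)"

definition irreducible_kernel :: "(nat \<Rightarrow> nat \<Rightarrow> real) \<Rightarrow> bool" where
  "irreducible_kernel Q \<longleftrightarrow> (\<forall>i j. (i, j) \<in> {(a, b). 0 < Q a b}\<^sup>*)"

text \<open>(M i, X i) is a Markov chain with transition matrix P started at i:
  its finite-dimensional distributions are the Markov ones.\<close>
definition markov_family ::
  "(nat \<Rightarrow> nat \<Rightarrow> real) \<Rightarrow> (nat \<Rightarrow> 'a measure) \<Rightarrow> (nat \<Rightarrow> nat \<Rightarrow> 'a \<Rightarrow> nat) \<Rightarrow> bool" where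
  "markov_family P M X \<longleftrightarrow>
     (\<forall>i. prob_space (M i) \<and>
        (\<forall>n. X i n \<in> measurable (M i) (count_space UNIV)) \<and>
        (\<forall>n xs. measure (M i) {\<omega> \<in> space (M i). \<forall>k\<le>n. X i k \<omega> = xs k}
                = (if xs 0 = i then 1 else 0) * (\<Prod>k<n. P (xs k) (xs (Suc k)))))"

definition local_time :: "(nat \<Rightarrow> 'a \<Rightarrow> nat) \<Rightarrow> nat \<Rightarrow> 'a \<Rightarrow> ennreal" where
  "local_time Y j \<omega> = (\<Sum>n. if Y n \<omega> = j then 1 else 0)"

definition eexp :: "ennreal \<Rightarrow> ennreal" where
  "eexp x = (if x = \<infinity> then \<infinity> else ennreal (exp (enn2real x)))"

definition prod_inf :: "(nat \<Rightarrow> real) \<Rightarrow> ennreal" where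
  "prod_inf a = lim (\<lambda>n. \<Prod>k<n. ennreal (a k))"

definition condC ::
  "(nat \<Rightarrow> nat \<Rightarrow> real) \<Rightarrow> (nat \<Rightarrow> 'a measure) \<Rightarrow> (nat \<Rightarrow> nat \<Rightarrow> 'a \<Rightarrow> nat) \<Rightarrow> bool" where
  "condC Q M X \<longleftrightarrow>
     (\<forall>i. (\<integral>\<^sup>+\<omega>. prod_inf (\<lambda>n. max (Qtot Q (X i n \<omega>)) 1) \<partial>M i) < \<infinity>)"

definition fval ::
  "(nat \<Rightarrow> nat \<Rightarrow> real) \<Rightarrow> (nat \<Rightarrow> 'a measure) \<Rightarrow> (nat \<Rightarrow> nat \<Rightarrow> 'a \<Rightarrow> nat) \<Rightarrow> nat \<Rightarrow> ennreal" where
  "fval Q M X i = (\<integral>\<^sup>+\<omega>. prod_inf (\<lambda>n. Qtot Q (X i n \<omega>)) \<partial>M i)"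

end

theory Submission
  imports Defs
begin

(* Let D be the sum of the \<delta>\<^sup>+(j) and p j = \<delta>\<^sup>+(j) / D. The exponent \<Sum>\<^sub>j \<delta>\<^sup>+(j) \<ell>(j) is the
   p-average of the D \<ell>(j), so by convexity exp (\<Sum>\<^sub>j \<delta>\<^sup>+(j) \<ell>(j)) \<le> \<Sum>\<^sub>j p j exp (D \<ell>(j)); taking
   expectations gives the first bound. The product of the max (Q(X n, \<int>\<^sub>+), 1) is
   exp (\<Sum>\<^sub>j \<delta>\<^sup>+(j) \<ell>(j)), which gives (C), and when this is finite the product of the Q(X n, \<int>\<^sub>+)
   converges to something no larger, which bounds f.
   For the limsup, splitting at the first visit to j and applying the Markov property there gives
   E\<^sub>i exp (D \<ell>(j)) \<le> 1 + P\<^sub>i(X hits j) E\<^sub>j exp (D \<ell>(j)), hence f(i) \<le> 1 + C \<Sum>\<^sub>j p j P\<^sub>i(X hits j)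
   with C = sup\<^sub>j E\<^sub>j exp (D \<ell>(j)). By the escape hypothesis each hitting probability vanishes as
   i \<rightarrow> \<infinity>, and by dominated convergence for series (Tannery's theorem) so does the sum. *)

section \<open>The extended exponential\<close>

lemma eexp_ennreal: "0 \<le> r \<Longrightarrow> eexp (ennreal r) = ennreal (exp r)"
  by (simp add: eexp_def)

lemma eexp_0 [simp]: "eexp 0 = 1"
  by (simp add: eexp_def)

lemma eexp_top [simp]: "eexp \<top> = \<top>"
  by (simp add: eexp_def)

lemma eexp_eq_top_iff: "eexp x = \<top> \<longleftrightarrow> x = \<top>"
  by (cases x) (auto simp: eexp_ennreal)

lemma eexp_mono: "x \<le> y \<Longrightarrow> eexp x \<le> eexp y"
  by (cases x; cases y) (auto simp: eexp_ennreal ennreal_le_iff2 top_unique)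

lemma le_eexp: "x \<le> eexp x"
proof (cases x)
  case (real r)
  then have "ennreal r \<le> ennreal (exp r)"
    using exp_ge_add_one_self[of r] by (intro ennreal_leI) linarith
  with real show ?thesis by (simp add: eexp_ennreal)
qed simp

lemma borel_measurable_eexp [measurable]: "eexp \<in> borel_measurable borel"
  unfolding eexp_def by measurable

lemma borel_measurable_eexp' [measurable (raw)]:
  "f \<in> borel_measurable M \<Longrightarrow> (\<lambda>x. eexp (f x)) \<in> borel_measurable M"
  using measurable_compose[OF _ borel_measurable_eexp] by blast

lemma eexp_SUP:
  assumes "incseq y"
  shows "eexp (SUP n. y n) = (SUP n. eexp (y n))"
proof (rule antisym)
  show "(SUP n. eexp (y n)) \<le> eexp (SUP n. y n)"
    by (intro SUP_least eexp_mono SUP_upper) simp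
next
  show "eexp (SUP n. y n) \<le> (SUP n. eexp (y n))"
  proof (cases "SUP n. y n")
    case (real r)
    then have "y n \<noteq> \<top>" for n
      using SUP_upper[of n UNIV y] by (auto simp: top_unique)
    then have eexp_y: "eexp (y n) = ennreal (exp (enn2real (y n)))" for n
      by (simp add: eexp_def)
    have "y \<longlonglongrightarrow> ennreal r"
      using LIMSEQ_SUP[OF assms] real by simp
    then have "(\<lambda>n. enn2real (y n)) \<longlonglongrightarrow> r"
      using real by (metis enn2real_ennreal ennreal_neq_top tendsto_enn2real)
    then have "(\<lambda>n. eexp (y n)) \<longlonglongrightarrow> ennreal (exp r)"
      unfolding eexp_y by (intro tendsto_ennrealI tendsto_exp)
    moreover have "incseq (\<lambda>n. eexp (y n))"
      using assms by (auto simp: incseq_def intro: eexp_mono)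
    ultimately have "ennreal (exp r) = (SUP n. eexp (y n))"
      using LIMSEQ_SUP LIMSEQ_unique by blast
    with real show ?thesis by (simp add: eexp_ennreal)
  next
    case top
    then have "eexp (SUP n. y n) = (SUP n. y n)" by (simp only: eexp_top)
    also have "\<dots> \<le> (SUP n. eexp (y n))"
      by (intro SUP_mono) (auto intro: le_eexp)
    finally show ?thesis .
  qed
qed

text \<open>\<open>e\<^sup>y \<ge> e\<^sup>r (1 + y - r)\<close>, the tangent at \<open>r\<close>, arranged so that no subtraction occurs.\<close>
lemma eexp_tangent_le:
  assumes "0 \<le> r"
  shows "ennreal (exp r) * (1 + y) \<le> eexp y + ennreal (exp r * r)"
proof (cases y)
  case (real s)
  have "exp r * (1 + (s - r)) \<le> exp r * exp (s - r)"
    using exp_ge_add_one_self[of "s - r"] by (intro mult_left_mono) auto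
  then have "exp r * (1 + s) \<le> exp s + exp r * r"
    by (simp add: algebra_simps exp_diff)
  then have "ennreal (exp r * (1 + s)) \<le> ennreal (exp s + exp r * r)"
    by (rule ennreal_leI)
  with real assms show ?thesis
    by (simp add: eexp_ennreal ennreal_mult ennreal_plus)
qed (simp add: ennreal_mult_top)

lemma sums_divide_suminf:
  fixes w :: "nat \<Rightarrow> real"
  assumes "summable w" and "suminf w \<noteq> 0"
  shows "(\<lambda>j. w j / suminf w) sums 1"
  using sums_divide[OF summable_sums[OF assms(1)], of "suminf w"]
  by (simp only: divide_self[OF assms(2)])

lemma suminf_ennreal_eq_1:
  assumes "p sums 1" and "\<And>j. 0 \<le> p j"
  shows "(\<Sum>j. ennreal (p j)) = 1"
proof -
  have "(\<lambda>j. ennreal (p j)) sums ennreal 1"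
    using assms by (subst sums_ennreal) auto
  then show ?thesis
    by (simp add: sums_iff)
qed

text \<open>Jensen: sum the tangent inequality at the mean \<open>r\<close> with the weights \<open>p\<close>.\<close>
lemma eexp_suminf_convex:
  fixes p :: "nat \<Rightarrow> real" and y :: "nat \<Rightarrow> ennreal"
  assumes p: "\<And>j. 0 \<le> p j" and ps: "p sums 1"
  shows "eexp (\<Sum>j. ennreal (p j) * y j) \<le> (\<Sum>j. ennreal (p j) * eexp (y j))"
proof (cases "\<Sum>j. ennreal (p j) * y j")
  case (real r)
  have ps': "(\<Sum>j. ennreal (p j)) = 1"
    using ps p by (rule suminf_ennreal_eq_1)
  have "ennreal (exp r) * (1 + ennreal r) = (\<Sum>j. ennreal (exp r) * (ennreal (p j) * (1 + y j)))"
    by (simp add: ennreal_suminf_cmult distrib_left suminf_add[symmetric] ps' real)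
  also have "\<dots> \<le> (\<Sum>j. ennreal (p j) * (eexp (y j) + ennreal (exp r * r)))"
  proof (intro suminf_le allI)
    fix j
    show "ennreal (exp r) * (ennreal (p j) * (1 + y j))
        \<le> ennreal (p j) * (eexp (y j) + ennreal (exp r * r))"
      using mult_left_mono[OF eexp_tangent_le[OF real(1), of "y j"], of "ennreal (p j)"]
      by (simp add: mult.left_commute)
  qed auto
  also have "\<dots> = (\<Sum>j. ennreal (p j) * eexp (y j)) + ennreal (exp r * r)"
    by (simp add: distrib_left suminf_add[symmetric] ennreal_suminf_multc ps')
  finally have "ennreal (exp r * r) + ennreal (exp r)
      \<le> ennreal (exp r * r) + (\<Sum>j. ennreal (p j) * eexp (y j))"
    using real by (simp add: distrib_left ennreal_mult[symmetric] add.commute)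
  then show ?thesis
    using real by (simp add: ennreal_add_left_cancel_le eexp_ennreal)
next
  case top
  have "(\<Sum>j. ennreal (p j) * y j) \<le> (\<Sum>j. ennreal (p j) * eexp (y j))"
    by (intro suminf_le mult_left_mono le_eexp) auto
  with top show ?thesis by (simp add: top_unique)
qed

section \<open>Infinite products\<close>

lemma max_1_eq_exp_max_ln:
  fixes q :: real
  assumes "0 < q"
  shows "max q 1 = exp (max (ln q) 0)"
proof (cases "1 \<le> q")
  case True
  then have "0 \<le> ln q"
    by (rule ln_ge_zero)
  with True assms show ?thesis
    by (simp add: max_def)
next
  case False
  then have "ln q < 0"
    using assms by simp
  with False show ?thesis
    by (simp add: max_def)
qed

lemma prod_inf_max_1_eq_eexp:
  assumes "\<And>n. 0 < q n"
  shows "prod_inf (\<lambda>n. max (q n) 1) = eexp (\<Sum>n. ennreal (max (ln (q n)) 0))"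
proof -
  define u where "u n = max (ln (q n)) 0" for n
  have u_nonneg: "0 \<le> u n" for n
    by (simp add: u_def)
  have "(\<Prod>k<n. max (q k) 1) = exp (\<Sum>k<n. u k)" for n
    using assms by (simp add: max_1_eq_exp_max_ln u_def exp_sum)
  then have partial: "(\<Prod>k<n. ennreal (max (q k) 1)) = eexp (\<Sum>k<n. ennreal (u k))" for n
    using u_nonneg by (simp add: prod_ennreal sum_ennreal eexp_ennreal sum_nonneg)
  have inc: "incseq (\<lambda>n. \<Sum>k<n. ennreal (u k))"
    by (intro incseq_SucI) simp
  then have "incseq (\<lambda>n. eexp (\<Sum>k<n. ennreal (u k)))"
    by (auto simp: incseq_def intro: eexp_mono)
  then have "prod_inf (\<lambda>n. max (q n) 1) = (SUP n. eexp (\<Sum>k<n. ennreal (u k)))"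
    unfolding prod_inf_def partial by (intro limI LIMSEQ_SUP)
  also have "\<dots> = eexp (\<Sum>n. ennreal (u n))"
    by (simp add: eexp_SUP[OF inc] suminf_eq_SUP)
  finally show ?thesis by (simp add: u_def)
qed

lemma prod_max_1_LIMSEQ:
  fixes q :: "nat \<Rightarrow> real"
  assumes "\<And>n. 0 < q n" and "summable (\<lambda>n. max (ln (q n)) 0)"
  shows "(\<lambda>n. \<Prod>k<n. max (q k) 1) \<longlonglongrightarrow> exp (\<Sum>n. max (ln (q n)) 0)"
proof -
  define u where "u n = max (ln (q n)) 0" for n
  have "(\<lambda>n. exp (\<Sum>k<n. u k)) \<longlonglongrightarrow> exp (suminf u)"
    using assms(2) unfolding u_def[abs_def] by (intro tendsto_exp summable_LIMSEQ)
  moreover have "(\<lambda>n. \<Prod>k<n. max (q k) 1) = (\<lambda>n. exp (\<Sum>k<n. u k))"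
    using assms(1) by (simp add: fun_eq_iff u_def max_1_eq_exp_max_ln exp_sum)
  ultimately show ?thesis
    by (simp add: u_def[abs_def])
qed

lemma prod_min_1_LIMSEQ:
  fixes q :: "nat \<Rightarrow> real"
  assumes "\<And>n. 0 \<le> q n"
  obtains b where "b \<le> 1" and "(\<lambda>n. \<Prod>k<n. min (q k) 1) \<longlonglongrightarrow> b"
proof -
  define B where "B n = (\<Prod>k<n. min (q k) 1)" for n
  have B_nonneg: "0 \<le> B n" and B_le_1: "B n \<le> 1" for n
    using assms by (auto simp: B_def intro: prod_nonneg prod_le_1)
  have "decseq B"
    using B_nonneg by (intro decseq_SucI) (simp add: B_def mult_left_le)
  then obtain b where "B \<longlonglongrightarrow> b"
    using decseq_convergent B_nonneg by blast
  moreover from this have "b \<le> 1"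
    using B_le_1 by (intro LIMSEQ_le_const2) auto
  ultimately show ?thesis
    using that by (simp add: B_def[abs_def])
qed

text \<open>As \<open>prod_inf\<close> is a \<open>lim\<close>, convergence of the partial products of \<open>q\<close> has to be shown.
  Splitting each factor as \<open>max q 1 * min q 1\<close>, they are those of \<open>max q 1\<close>, which converge,
  times a decreasing sequence in \<open>[0, 1]\<close>.\<close>
lemma prod_inf_le_prod_inf_max_1:
  assumes q: "\<And>n. 0 < q n" and fin: "(\<Sum>n. ennreal (max (ln (q n)) 0)) \<noteq> \<top>"
  shows "prod_inf q \<le> prod_inf (\<lambda>n. max (q n) 1)"
proof -
  define a where "a = exp (\<Sum>n. max (ln (q n)) 0)"
  have q_nonneg: "0 \<le> q n" for n
    using q[of n] by simp
  have "summable (\<lambda>n. max (ln (q n)) 0)"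
    using fin by (intro summable_suminf_not_top) auto
  then have max_lim: "(\<lambda>n. \<Prod>k<n. max (q k) 1) \<longlonglongrightarrow> a"
    unfolding a_def by (rule prod_max_1_LIMSEQ[OF q])
  obtain b where "b \<le> 1" and min_lim: "(\<lambda>n. \<Prod>k<n. min (q k) 1) \<longlonglongrightarrow> b"
    by (rule prod_min_1_LIMSEQ[OF q_nonneg])
  have "max x 1 * min x 1 = x" for x :: real
    by (simp add: max_def min_def)
  then have "(\<Prod>k<n. max (q k) 1) * (\<Prod>k<n. min (q k) 1) = (\<Prod>k<n. q k)" for n
    by (simp only: prod.distrib[symmetric])
  with tendsto_mult[OF max_lim min_lim] have "(\<lambda>n. \<Prod>k<n. q k) \<longlonglongrightarrow> a * b"
    by simp
  then have "(\<lambda>n. \<Prod>k<n. ennreal (q k)) \<longlonglongrightarrow> ennreal (a * b)"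
    using q_nonneg by (simp add: prod_ennreal tendsto_ennrealI)
  moreover have "(\<lambda>n. \<Prod>k<n. ennreal (max (q k) 1)) \<longlonglongrightarrow> ennreal a"
    using max_lim by (simp add: prod_ennreal tendsto_ennrealI)
  ultimately have "prod_inf q = ennreal (a * b)" and "prod_inf (\<lambda>n. max (q n) 1) = ennreal a"
    by (simp_all add: prod_inf_def limI)
  with \<open>b \<le> 1\<close> show ?thesis
    by (simp add: a_def ennreal_leI)
qed

section \<open>Path segments and the Markov property\<close>

definition segment :: "(nat \<Rightarrow> 'a \<Rightarrow> 'b) \<Rightarrow> nat \<Rightarrow> nat \<Rightarrow> 'a \<Rightarrow> 'b list" where
  "segment Y s m \<omega> = map (\<lambda>k. Y (s + k) \<omega>) [0..<m]"

lemma length_segment [simp]: "length (segment Y s m \<omega>) = m"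
  by (simp add: segment_def)

lemma segment_0 [simp]: "segment Y s 0 \<omega> = []"
  by (simp add: segment_def)

lemma segment_Suc: "segment Y s (Suc m) \<omega> = segment Y s m \<omega> @ [Y (s + m) \<omega>]"
  by (simp add: segment_def)

lemma segment_eq_iff: "segment Y s m \<omega> = xs \<longleftrightarrow> length xs = m \<and> (\<forall>k<m. Y (s + k) \<omega> = xs ! k)"
  by (auto simp: segment_def list_eq_iff_nth_eq)

lemma segment_add: "segment Y s (m + n) \<omega> = segment Y s m \<omega> @ segment Y (s + m) n \<omega>"
  by (auto simp: segment_def list_eq_iff_nth_eq nth_append)

lemma segment_Suc_left: "segment Y s (Suc m) \<omega> = Y s \<omega> # segment Y (Suc s) m \<omega>"
  using segment_add[of Y s 1 m \<omega>] by (simp add: segment_def)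

lemma take_segment: "t \<le> N \<Longrightarrow> take t (segment Y s N \<omega>) = segment Y s t \<omega>"
  by (simp add: segment_def take_map)

lemma drop_segment: "drop t (segment Y 0 N \<omega>) = segment Y t (N - t) \<omega>"
  by (auto simp: segment_def list_eq_iff_nth_eq)

lemma measurable_segment [measurable]:
  assumes [measurable]: "\<And>n. Y n \<in> measurable M (count_space UNIV)"
  shows "segment Y s m \<in> measurable M (count_space (UNIV :: 'b::countable list set))"
proof (subst measurable_count_space_eq2_countable, safe)
  fix xs :: "'b list"
  have "segment Y s m -` {xs} \<inter> space M
      = {\<omega> \<in> space M. length xs = m \<and> (\<forall>k<m. Y (s + k) \<omega> = xs ! k)}"
    unfolding segment_eq_iff[symmetric] by auto
  also have "\<dots> \<in> sets M" by measurable
  finally show "segment Y s m -` {xs} \<inter> space M \<in> sets M" .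
qed simp

fun path_weight :: "(nat \<Rightarrow> nat \<Rightarrow> real) \<Rightarrow> nat list \<Rightarrow> real" where
  "path_weight P (x # y # zs) = P x y * path_weight P (y # zs)"
| "path_weight P _ = 1"

lemma prod_eq_path_weight:
  "length zs = Suc n \<Longrightarrow> (\<Prod>k<n. P (zs ! k) (zs ! Suc k)) = path_weight P zs"
proof (induction n arbitrary: zs)
  case (Suc n)
  then obtain x y ys where "zs = x # y # ys"
    by (metis length_Suc_conv)
  with Suc.prems Suc.IH[of "y # ys"] show ?case
    by (simp only: prod.lessThan_Suc_shift) simp
qed (auto simp: length_Suc_conv)

lemma path_weight_append:
  "path_weight P (xs @ y # zs) = path_weight P (xs @ [y]) * path_weight P (y # zs)"
  by (induction P xs rule: path_weight.induct) auto

lemma markov_family_prob_space: "markov_family P M X \<Longrightarrow> prob_space (M i)"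
  by (simp add: markov_family_def)

lemma markov_family_measurable:
  "markov_family P M X \<Longrightarrow> X i n \<in> measurable (M i) (count_space UNIV)"
  by (simp add: markov_family_def)

lemma markov_family_segment:
  assumes "markov_family P M X" and "length zs = Suc n"
  shows "measure (M i) {\<omega> \<in> space (M i). segment (X i) 0 (Suc n) \<omega> = zs}
       = of_bool (hd zs = i) * path_weight P zs"
proof -
  have "{\<omega> \<in> space (M i). segment (X i) 0 (Suc n) \<omega> = zs}
      = {\<omega> \<in> space (M i). \<forall>k\<le>n. X i k \<omega> = zs ! k}"
    using assms(2) by (auto simp: segment_eq_iff less_Suc_eq_le)
  moreover have "hd zs = zs ! 0"
    using assms(2) by (cases zs) auto
  ultimately show ?thesis
    using assms by (simp add: markov_family_def prod_eq_path_weight)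
qed

lemma segment_split_eq_iff:
  assumes "length xs' = t"
  shows "segment Y 0 (Suc t) \<omega> = xs' @ [x] \<and> segment Y t (Suc n) \<omega> = x # ys'
    \<longleftrightarrow> segment Y 0 (Suc (t + n)) \<omega> = xs' @ x # ys'"
proof -
  have "segment Y 0 (Suc (t + n)) \<omega> = segment Y 0 t \<omega> @ Y t \<omega> # segment Y (Suc t) n \<omega>"
    using segment_add[of Y 0 t "Suc n" \<omega>] by (simp add: segment_Suc_left)
  moreover have "segment Y 0 (Suc t) \<omega> = segment Y 0 t \<omega> @ [Y t \<omega>]"
    by (simp add: segment_Suc)
  moreover have "segment Y t (Suc n) \<omega> = Y t \<omega> # segment Y (Suc t) n \<omega>"
    by (rule segment_Suc_left)
  ultimately show ?thesis
    using assms by (simp only:) (simp add: append_eq_append_conv)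
qed

lemma markov_family_segment_split:
  assumes mf: "markov_family P M X" and xs: "length xs = Suc t" and ys: "length ys = Suc n"
  shows "measure (M i) {\<omega> \<in> space (M i). segment (X i) 0 (Suc t) \<omega> = xs \<and> segment (X i) t (Suc n) \<omega> = ys}
       = measure (M i) {\<omega> \<in> space (M i). segment (X i) 0 (Suc t) \<omega> = xs}
         * measure (M (last xs)) {\<omega> \<in> space (M (last xs)). segment (X (last xs)) 0 (Suc n) \<omega> = ys}"
proof -
  obtain xs' x where xs': "xs = xs' @ [x]" and "length xs' = t"
    using xs by (cases xs rule: rev_cases) auto
  obtain y ys' where ys': "ys = y # ys'"
    using ys by (cases ys) auto
  have "hd (xs' @ x # ys') = hd (xs' @ [x])"
    by (cases xs') auto
  show ?thesis
  proof (cases "y = x")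
    case True
    then have "measure (M i) {\<omega> \<in> space (M i). segment (X i) 0 (Suc t) \<omega> = xs \<and> segment (X i) t (Suc n) \<omega> = ys}
        = measure (M i) {\<omega> \<in> space (M i). segment (X i) 0 (Suc (t + n)) \<omega> = xs' @ x # ys'}"
      by (simp add: xs' ys' segment_split_eq_iff[OF \<open>length xs' = t\<close>])
    also have "\<dots> = measure (M i) {\<omega> \<in> space (M i). segment (X i) 0 (Suc t) \<omega> = xs}
        * measure (M x) {\<omega> \<in> space (M x). segment (X x) 0 (Suc n) \<omega> = ys}"
      using xs ys \<open>length xs' = t\<close> True \<open>hd (xs' @ x # ys') = hd (xs' @ [x])\<close>
      by (simp add: markov_family_segment[OF mf] xs' ys' path_weight_append[of P xs' x ys'])
    finally show ?thesis
      by (simp add: xs')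
  next
    case False
    have "X i t \<omega> = x" if "segment (X i) 0 (Suc t) \<omega> = xs" for \<omega>
      using that[unfolded segment_Suc] by (simp add: xs')
    moreover have "X i t \<omega> = y" if "segment (X i) t (Suc n) \<omega> = ys" for \<omega>
      using that[unfolded segment_Suc_left] by (simp add: ys')
    ultimately have "{\<omega> \<in> space (M i). segment (X i) 0 (Suc t) \<omega> = xs \<and> segment (X i) t (Suc n) \<omega> = ys} = {}"
      using False by force
    then show ?thesis
      using False ys by (simp only: measure_empty) (simp add: markov_family_segment[OF mf] xs' ys')
  qed
qed

lemma emeasure_markov_family_segment_split:
  assumes mf: "markov_family P M X"
  shows "emeasure (M i) {\<omega> \<in> space (M i). segment (X i) 0 (Suc t) \<omega> = xs \<and> segment (X i) t (Suc n) \<omega> = ys}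
       = emeasure (M i) {\<omega> \<in> space (M i). segment (X i) 0 (Suc t) \<omega> = xs}
         * emeasure (M (last xs)) {\<omega> \<in> space (M (last xs)). segment (X (last xs)) 0 (Suc n) \<omega> = ys}"
proof -
  interpret Mi: prob_space "M i"
    by (rule markov_family_prob_space[OF mf])
  interpret Ml: prob_space "M (last xs)"
    by (rule markov_family_prob_space[OF mf])
  consider "length xs = Suc t" "length ys = Suc n" | "length xs \<noteq> Suc t" | "length ys \<noteq> Suc n"
    by blast
  then show ?thesis
  proof cases
    case 1
    then show ?thesis
      by (simp add: Mi.emeasure_eq_measure Ml.emeasure_eq_measure markov_family_segment_split[OF mf]
          ennreal_mult)
  next
    case 2
    then have "{\<omega> \<in> space (M i). segment (X i) 0 (Suc t) \<omega> = xs} = {}"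
      and "{\<omega> \<in> space (M i). segment (X i) 0 (Suc t) \<omega> = xs \<and> segment (X i) t (Suc n) \<omega> = ys} = {}"
      by auto
    then show ?thesis
      by (simp only: emeasure_empty) simp
  next
    case 3
    then have "{\<omega> \<in> space (M (last xs)). segment (X (last xs)) 0 (Suc n) \<omega> = ys} = {}"
      and "{\<omega> \<in> space (M i). segment (X i) 0 (Suc t) \<omega> = xs \<and> segment (X i) t (Suc n) \<omega> = ys} = {}"
      by auto
    then show ?thesis
      by (simp only: emeasure_empty) simp
  qed
qed

lemma nn_integral_countable_values:
  fixes p :: "'a \<Rightarrow> 'b::countable"
  assumes sets: "\<And>x. {\<omega> \<in> space M. p \<omega> = x} \<in> sets M"
  shows "(\<integral>\<^sup>+\<omega>. F (p \<omega>) \<partial>M) = (\<integral>\<^sup>+x. F x * emeasure M {\<omega> \<in> space M. p \<omega> = x} \<partial>count_space UNIV)"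
proof -
  have "F (p \<omega>) = (\<integral>\<^sup>+x. F x * indicator {\<omega> \<in> space M. p \<omega> = x} \<omega> \<partial>count_space UNIV)"
    if "\<omega> \<in> space M" for \<omega>
  proof -
    have "(\<integral>\<^sup>+x. F x * indicator {\<omega> \<in> space M. p \<omega> = x} \<omega> \<partial>count_space UNIV)
        = (\<Sum>x\<in>{p \<omega>}. F x * indicator {\<omega> \<in> space M. p \<omega> = x} \<omega>)"
      using that by (intro nn_integral_count_space') (auto split: split_indicator)
    with that show ?thesis
      by simp
  qed
  then have "(\<integral>\<^sup>+\<omega>. F (p \<omega>) \<partial>M)
      = (\<integral>\<^sup>+\<omega>. \<integral>\<^sup>+x. F x * indicator {\<omega> \<in> space M. p \<omega> = x} \<omega> \<partial>count_space UNIV \<partial>M)"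
    by (rule nn_integral_cong)
  also have "\<dots> = (\<integral>\<^sup>+x. \<integral>\<^sup>+\<omega>. F x * indicator {\<omega> \<in> space M. p \<omega> = x} \<omega> \<partial>M \<partial>count_space UNIV)"
    using sets by (intro nn_integral_count_space_nn_integral) auto
  also have "\<dots> = (\<integral>\<^sup>+x. F x * emeasure M {\<omega> \<in> space M. p \<omega> = x} \<partial>count_space UNIV)"
    using sets by (intro nn_integral_cong nn_integral_cmult_indicator)
  finally show ?thesis .
qed

lemma nn_integral_count_space_mult_fst_snd:
  fixes f :: "'a::countable \<Rightarrow> ennreal" and g :: "'b::countable \<Rightarrow> ennreal"
  shows "(\<integral>\<^sup>+z. f (fst z) * g (snd z) \<partial>count_space UNIV)
       = (\<integral>\<^sup>+x. f x \<partial>count_space UNIV) * (\<integral>\<^sup>+y. g y \<partial>count_space UNIV)"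
proof -
  have meas: "(\<lambda>z. f (fst z) * g (snd z)) \<in> borel_measurable (count_space UNIV \<Otimes>\<^sub>M count_space UNIV)"
    by (simp add: pair_measure_countable)
  have "(\<integral>\<^sup>+z. f (fst z) * g (snd z) \<partial>count_space UNIV)
      = (\<integral>\<^sup>+z. f (fst z) * g (snd z) \<partial>(count_space UNIV \<Otimes>\<^sub>M count_space UNIV))"
    by (rule nn_integral_count_space_prod_eq[symmetric])
  also have "\<dots> = (\<integral>\<^sup>+x. \<integral>\<^sup>+y. f x * g y \<partial>count_space UNIV \<partial>count_space UNIV)"
    using sigma_finite_measure.nn_integral_fst[OF sigma_finite_measure_count_space meas] by simp
  also have "\<dots> = (\<integral>\<^sup>+x. f x \<partial>count_space UNIV) * (\<integral>\<^sup>+y. g y \<partial>count_space UNIV)"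
    by (simp add: nn_integral_cmult nn_integral_multc)
  finally show ?thesis .
qed

lemma nn_integral_markov_family_split:
  assumes mf: "markov_family P M X" and a: "\<And>xs. a xs \<noteq> 0 \<Longrightarrow> last xs = j"
  shows "(\<integral>\<^sup>+\<omega>. a (segment (X i) 0 (Suc t) \<omega>) * g (segment (X i) t (Suc n) \<omega>) \<partial>M i)
       = (\<integral>\<^sup>+\<omega>. a (segment (X i) 0 (Suc t) \<omega>) \<partial>M i) * (\<integral>\<^sup>+\<omega>. g (segment (X j) 0 (Suc n) \<omega>) \<partial>M j)"
proof -
  note [measurable] = markov_family_measurable[OF mf]
  define E where "E k m xs = emeasure (M k) {\<omega> \<in> space (M k). segment (X k) 0 m \<omega> = xs}" for k m xs
  define p where "p \<omega> = (segment (X i) 0 (Suc t) \<omega>, segment (X i) t (Suc n) \<omega>)" for \<omega>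
  have sets_p: "{\<omega> \<in> space (M i). p \<omega> = z} \<in> sets (M i)" for z
    unfolding p_def by (cases z) simp
  have "a (fst z) * g (snd z) * emeasure (M i) {\<omega> \<in> space (M i). p \<omega> = z}
      = a (fst z) * E i (Suc t) (fst z) * (g (snd z) * E j (Suc n) (snd z))" for z
    using emeasure_markov_family_segment_split[OF mf, of i t "fst z" n "snd z"] a[of "fst z"]
    by (cases "a (fst z) = 0") (simp_all add: p_def E_def prod_eq_iff mult_ac)
  then have "(\<integral>\<^sup>+\<omega>. a (segment (X i) 0 (Suc t) \<omega>) * g (segment (X i) t (Suc n) \<omega>) \<partial>M i)
      = (\<integral>\<^sup>+z. a (fst z) * E i (Suc t) (fst z) * (g (snd z) * E j (Suc n) (snd z)) \<partial>count_space UNIV)"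
    using nn_integral_countable_values[OF sets_p, of "\<lambda>z. a (fst z) * g (snd z)"]
    by (simp add: p_def)
  also have "\<dots> = (\<integral>\<^sup>+xs. a xs * E i (Suc t) xs \<partial>count_space UNIV)
      * (\<integral>\<^sup>+ys. g ys * E j (Suc n) ys \<partial>count_space UNIV)"
    by (rule nn_integral_count_space_mult_fst_snd)
  also have "\<dots> = (\<integral>\<^sup>+\<omega>. a (segment (X i) 0 (Suc t) \<omega>) \<partial>M i) * (\<integral>\<^sup>+\<omega>. g (segment (X j) 0 (Suc n) \<omega>) \<partial>M j)"
    unfolding E_def by (simp add: nn_integral_countable_values[symmetric])
  finally show ?thesis .
qed

section \<open>Local times and first visits\<close>

lemma suminf_mult_local_time:
  assumes "\<And>j. 0 \<le> c j"
  shows "(\<Sum>j. ennreal (c j) * local_time Y j \<omega>) = (\<Sum>n. ennreal (c (Y n \<omega>)))"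
proof -
  have "(\<Sum>j. ennreal (c j) * local_time Y j \<omega>)
      = (\<Sum>j. \<Sum>n. ennreal (c j) * of_bool (Y n \<omega> = j))"
    by (simp add: local_time_def ennreal_suminf_cmult of_bool_def)
  also have "\<dots> = (\<Sum>n. \<Sum>j. ennreal (c j) * of_bool (Y n \<omega> = j))"
    unfolding nn_integral_count_space_nat[symmetric]
    by (intro nn_integral_count_space_nn_integral) auto
  also have "\<dots> = (\<Sum>n. ennreal (c (Y n \<omega>)))"
  proof (rule suminf_cong)
    fix n
    have "(\<Sum>j. ennreal (c j) * of_bool (Y n \<omega> = j))
        = (\<Sum>j\<in>{Y n \<omega>}. ennreal (c j) * of_bool (Y n \<omega> = j))"
      by (rule suminf_finite) auto
    then show "(\<Sum>j. ennreal (c j) * of_bool (Y n \<omega> = j)) = ennreal (c (Y n \<omega>))"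
      by simp
  qed
  finally show ?thesis .
qed

lemma count_list_segment_mono:
  "m \<le> n \<Longrightarrow> count_list (segment Y 0 m \<omega>) j \<le> count_list (segment Y 0 n \<omega>) j"
  using segment_add[of Y 0 m "n - m" \<omega>] by simp

lemma local_time_eq_SUP:
  "local_time Y j \<omega> = (SUP N. of_nat (count_list (segment Y 0 N \<omega>) j))"
proof -
  have "(\<Sum>n<N. if Y n \<omega> = j then 1 else 0 :: ennreal) = of_nat (count_list (segment Y 0 N \<omega>) j)" for N
    by (induction N) (simp_all add: segment_Suc)
  then show ?thesis
    by (simp add: local_time_def suminf_eq_SUP)
qed

lemma count_list_segment_le_local_time:
  "of_nat (count_list (segment Y 0 N \<omega>) j) \<le> local_time Y j \<omega>"
  unfolding local_time_eq_SUP by (rule SUP_upper) simp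

lemma borel_measurable_local_time [measurable]:
  assumes [measurable]: "\<And>n. Y n \<in> measurable M (count_space UNIV)"
  shows "local_time Y j \<in> borel_measurable M"
  unfolding local_time_def by measurable

definition first_visit_at :: "'b \<Rightarrow> nat \<Rightarrow> 'b list \<Rightarrow> bool" where
  "first_visit_at j t xs \<longleftrightarrow> length xs = Suc t \<and> last xs = j \<and> j \<notin> set (butlast xs)"

lemma first_visit_at_take_iff:
  assumes "t < length p"
  shows "first_visit_at j t (take (Suc t) p) \<longleftrightarrow> p ! t = j \<and> j \<notin> set (take t p)"
  using assms by (simp add: first_visit_at_def take_Suc_conv_app_nth)

lemma sum_first_visit_at_eq:
  fixes c :: "nat \<Rightarrow> 'a::semiring_1"
  assumes p: "p = ys @ j # zs" and ys: "j \<notin> set ys"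
  shows "(\<Sum>t<length p. of_bool (first_visit_at j t (take (Suc t) p)) * c t) = c (length ys)"
proof -
  have "first_visit_at j t (take (Suc t) p) \<longleftrightarrow> t = length ys" if "t < length p" for t
  proof -
    consider "t < length ys" | "t = length ys" | "length ys < t"
      by linarith
    then show ?thesis
    proof cases
      case 1
      then have "p ! t \<in> set ys"
        by (simp add: p nth_append)
      with 1 ys show ?thesis
        using that by (auto simp: first_visit_at_take_iff)
    next
      case 3
      then have "take t p ! length ys = j" and "length ys < length (take t p)"
        using that by (simp_all add: p nth_append)
      then have "j \<in> set (take t p)"
        by (metis nth_mem)
      with 3 show ?thesis
        using that by (simp add: first_visit_at_take_iff)
    qed (use that ys in \<open>simp add: first_visit_at_def p take_Suc_conv_app_nth nth_append\<close>)
  qed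
  then have "(\<Sum>t<length p. of_bool (first_visit_at j t (take (Suc t) p)) * c t)
      = (\<Sum>t<length p. if t = length ys then c t else 0)"
    by (intro sum.cong) auto
  also have "\<dots> = c (length ys)"
    by (simp add: p)
  finally show ?thesis .
qed

lemma sum_first_visit_at_not_in:
  fixes c :: "nat \<Rightarrow> 'a::semiring_1"
  shows "j \<notin> set p \<Longrightarrow> (\<Sum>t<length p. of_bool (first_visit_at j t (take (Suc t) p)) * c t) = 0"
  by (intro sum.neutral) (auto simp: first_visit_at_take_iff)

lemma sum_first_visit_at:
  "(\<Sum>t<length p. of_bool (first_visit_at j t (take (Suc t) p)) :: 'a::semiring_1) = of_bool (j \<in> set p)"
proof (cases "j \<in> set p")
  case True
  then obtain ys zs where p: "p = ys @ j # zs" and ys: "j \<notin> set ys"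
    by (auto dest: split_list_first)
  have "(\<Sum>t<length p. of_bool (first_visit_at j t (take (Suc t) p)) * (1 :: 'a)) = 1"
    by (rule sum_first_visit_at_eq[OF p ys])
  with True show ?thesis
    by simp
qed (use sum_first_visit_at_not_in[where c = "\<lambda>_. 1 :: 'a"] in simp)

lemma eexp_count_list_first_visit:
  "eexp (D * of_nat (count_list p j))
    = of_bool (j \<notin> set p)
      + (\<Sum>t<length p. of_bool (first_visit_at j t (take (Suc t) p)) * eexp (D * of_nat (count_list (drop t p) j)))"
proof (cases "j \<in> set p")
  case True
  then obtain ys zs where p: "p = ys @ j # zs" and ys: "j \<notin> set ys"
    by (auto dest: split_list_first)
  then have "count_list p j = count_list (drop (length ys) p) j"
    by simp
  with True show ?thesis
    by (simp add: sum_first_visit_at_eq[OF p ys])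
next
  case False
  then show ?thesis
    using sum_first_visit_at_not_in[of j p "\<lambda>t. eexp (D * of_nat (count_list (drop t p) j))"]
    by simp
qed

lemma nn_integral_first_visit_eexp_le:
  assumes mf: "markov_family P M X" and "t < N"
  shows "(\<integral>\<^sup>+\<omega>. of_bool (first_visit_at j t (segment (X i) 0 (Suc t) \<omega>))
            * eexp (D * of_nat (count_list (segment (X i) t (N - t) \<omega>) j)) \<partial>M i)
       \<le> (\<integral>\<^sup>+\<omega>. of_bool (first_visit_at j t (segment (X i) 0 (Suc t) \<omega>)) \<partial>M i)
            * (\<integral>\<^sup>+\<omega>. eexp (D * local_time (X j) j \<omega>) \<partial>M j)"
proof -
  obtain n where n: "N - t = Suc n"
    using assms(2) by (metis Suc_diff_Suc)
  have "(\<integral>\<^sup>+\<omega>. of_bool (first_visit_at j t (segment (X i) 0 (Suc t) \<omega>))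
            * eexp (D * of_nat (count_list (segment (X i) t (N - t) \<omega>) j)) \<partial>M i)
      = (\<integral>\<^sup>+\<omega>. of_bool (first_visit_at j t (segment (X i) 0 (Suc t) \<omega>)) \<partial>M i)
            * (\<integral>\<^sup>+\<omega>. eexp (D * of_nat (count_list (segment (X j) 0 (Suc n) \<omega>) j)) \<partial>M j)"
    unfolding n by (rule nn_integral_markov_family_split[OF mf]) (simp add: first_visit_at_def)
  also have "\<dots> \<le> (\<integral>\<^sup>+\<omega>. of_bool (first_visit_at j t (segment (X i) 0 (Suc t) \<omega>)) \<partial>M i)
            * (\<integral>\<^sup>+\<omega>. eexp (D * local_time (X j) j \<omega>) \<partial>M j)"
    by (intro mult_left_mono nn_integral_mono eexp_mono count_list_segment_le_local_time) simp_all
  finally show ?thesis .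
qed

lemma nn_integral_sum_first_visit_le:
  assumes [measurable]: "\<And>n. Y n \<in> measurable M (count_space UNIV)"
  shows "(\<integral>\<^sup>+\<omega>. (\<Sum>t<N. of_bool (first_visit_at j t (segment Y 0 (Suc t) \<omega>))) \<partial>M)
       \<le> emeasure M {\<omega> \<in> space M. \<exists>n. Y n \<omega> = j}"
proof -
  have "(\<Sum>t<N. of_bool (first_visit_at j t (segment Y 0 (Suc t) \<omega>)))
      \<le> (indicator {\<omega> \<in> space M. \<exists>n. Y n \<omega> = j} \<omega> :: ennreal)" if "\<omega> \<in> space M" for \<omega>
  proof -
    have "(\<Sum>t<N. of_bool (first_visit_at j t (segment Y 0 (Suc t) \<omega>)))
        = (of_bool (j \<in> set (segment Y 0 N \<omega>)) :: ennreal)"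
      using sum_first_visit_at[of j "segment Y 0 N \<omega>"] by (simp add: take_segment Suc_leI)
    also have "\<dots> \<le> indicator {\<omega> \<in> space M. \<exists>n. Y n \<omega> = j} \<omega>"
      using that by (auto simp: segment_def split: split_indicator)
    finally show ?thesis .
  qed
  then have "(\<integral>\<^sup>+\<omega>. (\<Sum>t<N. of_bool (first_visit_at j t (segment Y 0 (Suc t) \<omega>))) \<partial>M)
      \<le> (\<integral>\<^sup>+\<omega>. indicator {\<omega> \<in> space M. \<exists>n. Y n \<omega> = j} \<omega> \<partial>M)"
    by (rule nn_integral_mono)
  then show ?thesis
    by simp
qed

text \<open>After the first visit to \<open>j\<close>, the chain restarts from \<open>j\<close>; before it, \<open>j\<close> is not counted.\<close>
lemma nn_integral_eexp_count_list_le: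
  assumes mf: "markov_family P M X"
  shows "(\<integral>\<^sup>+\<omega>. eexp (D * of_nat (count_list (segment (X i) 0 N \<omega>) j)) \<partial>M i)
       \<le> 1 + emeasure (M i) {\<omega> \<in> space (M i). \<exists>n. X i n \<omega> = j}
            * (\<integral>\<^sup>+\<omega>. eexp (D * local_time (X j) j \<omega>) \<partial>M j)"
proof -
  interpret prob_space "M i"
    by (rule markov_family_prob_space[OF mf])
  note [measurable] = markov_family_measurable[OF mf]
  define B where "B = (\<integral>\<^sup>+\<omega>. eexp (D * local_time (X j) j \<omega>) \<partial>M j)"
  define V where "V t \<omega> = (of_bool (first_visit_at j t (segment (X i) 0 (Suc t) \<omega>)) :: ennreal)" for t \<omega>
  define R where "R t \<omega> = eexp (D * of_nat (count_list (segment (X i) t (N - t) \<omega>) j))" for t \<omega>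
  have [measurable]: "V t \<in> borel_measurable (M i)" "R t \<in> borel_measurable (M i)" for t
    unfolding V_def R_def by measurable
  have "eexp (D * of_nat (count_list (segment (X i) 0 N \<omega>) j))
      = of_bool (j \<notin> set (segment (X i) 0 N \<omega>)) + (\<Sum>t<N. V t \<omega> * R t \<omega>)" for \<omega>
    using eexp_count_list_first_visit[of D "segment (X i) 0 N \<omega>" j]
    by (simp add: V_def R_def take_segment drop_segment Suc_leI)
  then have "(\<integral>\<^sup>+\<omega>. eexp (D * of_nat (count_list (segment (X i) 0 N \<omega>) j)) \<partial>M i)
      = (\<integral>\<^sup>+\<omega>. of_bool (j \<notin> set (segment (X i) 0 N \<omega>)) \<partial>M i) + (\<Sum>t<N. \<integral>\<^sup>+\<omega>. V t \<omega> * R t \<omega> \<partial>M i)"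
    by (simp add: nn_integral_add nn_integral_sum)
  also have "\<dots> \<le> 1 + (\<Sum>t<N. (\<integral>\<^sup>+\<omega>. V t \<omega> \<partial>M i) * B)"
  proof (rule add_mono)
    show "(\<integral>\<^sup>+\<omega>. of_bool (j \<notin> set (segment (X i) 0 N \<omega>)) \<partial>M i) \<le> 1"
      using nn_integral_mono[of "M i" _ "\<lambda>_. 1"] by (simp add: emeasure_space_1)
    show "(\<Sum>t<N. \<integral>\<^sup>+\<omega>. V t \<omega> * R t \<omega> \<partial>M i) \<le> (\<Sum>t<N. (\<integral>\<^sup>+\<omega>. V t \<omega> \<partial>M i) * B)"
      unfolding V_def R_def B_def by (intro sum_mono nn_integral_first_visit_eexp_le[OF mf]) simp
  qed
  also have "\<dots> = 1 + (\<integral>\<^sup>+\<omega>. (\<Sum>t<N. V t \<omega>) \<partial>M i) * B"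
    by (simp add: nn_integral_sum sum_distrib_right)
  also have "\<dots> \<le> 1 + emeasure (M i) {\<omega> \<in> space (M i). \<exists>n. X i n \<omega> = j} * B"
    unfolding V_def
    by (intro add_left_mono mult_right_mono nn_integral_sum_first_visit_le) simp_all
  finally show ?thesis
    by (simp add: B_def)
qed

lemma nn_integral_eexp_local_time_le:
  assumes mf: "markov_family P M X"
  shows "(\<integral>\<^sup>+\<omega>. eexp (D * local_time (X i) j \<omega>) \<partial>M i)
       \<le> 1 + emeasure (M i) {\<omega> \<in> space (M i). \<exists>n. X i n \<omega> = j}
            * (\<integral>\<^sup>+\<omega>. eexp (D * local_time (X j) j \<omega>) \<partial>M j)"
proof -
  note [measurable] = markov_family_measurable[OF mf]
  define c where "c N \<omega> = eexp (D * of_nat (count_list (segment (X i) 0 N \<omega>) j))" for N \<omega>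
  have count_mono: "incseq (\<lambda>N. D * of_nat (count_list (segment (X i) 0 N \<omega>) j))" for \<omega>
    by (auto simp: incseq_def intro!: mult_left_mono count_list_segment_mono)
  then have "incseq c"
    by (auto simp: c_def incseq_def le_fun_def intro: eexp_mono)
  have "eexp (D * local_time (X i) j \<omega>) = (SUP N. c N \<omega>)" for \<omega>
    by (simp add: c_def local_time_eq_SUP SUP_mult_left_ennreal eexp_SUP[OF count_mono])
  then have "(\<integral>\<^sup>+\<omega>. eexp (D * local_time (X i) j \<omega>) \<partial>M i) = (\<integral>\<^sup>+\<omega>. (SUP N. c N \<omega>) \<partial>M i)"
    by simp
  also have "\<dots> = (SUP N. \<integral>\<^sup>+\<omega>. c N \<omega> \<partial>M i)"
    by (rule nn_integral_monotone_convergence_SUP[OF \<open>incseq c\<close>]) (unfold c_def, measurable)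
  also have "\<dots> \<le> 1 + emeasure (M i) {\<omega> \<in> space (M i). \<exists>n. X i n \<omega> = j}
            * (\<integral>\<^sup>+\<omega>. eexp (D * local_time (X j) j \<omega>) \<partial>M j)"
    unfolding c_def by (intro SUP_least nn_integral_eexp_count_list_le[OF mf])
  finally show ?thesis .
qed

section \<open>Exponential moments of weighted local times\<close>

lemma nn_integral_eexp_suminf_le_weighted:
  fixes w :: "nat \<Rightarrow> real" and L :: "nat \<Rightarrow> 'a \<Rightarrow> ennreal"
  assumes w: "\<And>j. 0 \<le> w j" "summable w" "0 < suminf w"
    and [measurable]: "\<And>j. L j \<in> borel_measurable M"
  shows "(\<integral>\<^sup>+\<omega>. eexp (\<Sum>j. ennreal (w j) * L j \<omega>) \<partial>M)
       \<le> (\<Sum>j. ennreal (w j / suminf w) * (\<integral>\<^sup>+\<omega>. eexp (ennreal (suminf w) * L j \<omega>) \<partial>M))"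
proof -
  define W where "W = suminf w"
  define p where "p j = w j / W" for j
  have p: "0 \<le> p j" for j
    using w by (simp add: p_def W_def)
  have "p sums 1"
    unfolding p_def[abs_def] W_def using w by (intro sums_divide_suminf) auto
  have w_eq: "ennreal (w j) = ennreal (p j) * ennreal W" for j
    using w p[of j] by (simp add: p_def W_def flip: ennreal_mult)
  have "eexp (\<Sum>j. ennreal (w j) * L j \<omega>) \<le> (\<Sum>j. ennreal (p j) * eexp (ennreal W * L j \<omega>))" for \<omega>
    using eexp_suminf_convex[OF p \<open>p sums 1\<close>, of "\<lambda>j. ennreal W * L j \<omega>"]
    by (simp add: w_eq mult.assoc)
  then have "(\<integral>\<^sup>+\<omega>. eexp (\<Sum>j. ennreal (w j) * L j \<omega>) \<partial>M)
      \<le> (\<integral>\<^sup>+\<omega>. (\<Sum>j. ennreal (p j) * eexp (ennreal W * L j \<omega>)) \<partial>M)"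
    by (intro nn_integral_mono)
  also have "\<dots> = (\<Sum>j. ennreal (p j) * (\<integral>\<^sup>+\<omega>. eexp (ennreal W * L j \<omega>) \<partial>M))"
    by (simp add: nn_integral_suminf nn_integral_cmult)
  finally show ?thesis
    by (simp add: p_def W_def)
qed

lemma nn_integral_eexp_suminf_le_SUP:
  fixes w :: "nat \<Rightarrow> real" and L :: "nat \<Rightarrow> 'a \<Rightarrow> ennreal"
  assumes w: "\<And>j. 0 \<le> w j" "summable w"
    and [measurable]: "\<And>j. L j \<in> borel_measurable M"
  shows "(\<integral>\<^sup>+\<omega>. eexp (\<Sum>j. ennreal (w j) * L j \<omega>) \<partial>M)
       \<le> (SUP j. \<integral>\<^sup>+\<omega>. eexp (ennreal (suminf w) * L j \<omega>) \<partial>M)"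
proof (cases "suminf w = 0")
  case True
  then have "w j = 0" for j
    using suminf_eq_zero_iff[OF w(2,1)] by simp
  with True show ?thesis
    by simp
next
  case False
  then have "0 < suminf w"
    using suminf_nonneg[OF w(2,1)] by simp
  define S where "S = (SUP j. \<integral>\<^sup>+\<omega>. eexp (ennreal (suminf w) * L j \<omega>) \<partial>M)"
  have "(\<integral>\<^sup>+\<omega>. eexp (\<Sum>j. ennreal (w j) * L j \<omega>) \<partial>M)
      \<le> (\<Sum>j. ennreal (w j / suminf w) * (\<integral>\<^sup>+\<omega>. eexp (ennreal (suminf w) * L j \<omega>) \<partial>M))"
    using w \<open>0 < suminf w\<close> by (intro nn_integral_eexp_suminf_le_weighted) auto
  also have "\<dots> \<le> (\<Sum>j. ennreal (w j / suminf w) * S)"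
    unfolding S_def by (intro suminf_le mult_left_mono SUP_upper) auto
  also have "\<dots> = S"
  proof -
    have "(\<Sum>j. ennreal (w j / suminf w)) = 1"
      using w \<open>0 < suminf w\<close> by (intro suminf_ennreal_eq_1 sums_divide_suminf) auto
    then show ?thesis
      unfolding ennreal_suminf_multc by simp
  qed
  finally show ?thesis
    by (simp add: S_def)
qed

lemma delta_plus_nonneg: "0 \<le> delta_plus Q j"
  by (simp add: delta_plus_def)

lemma suminf_delta_plus_local_time:
  "(\<Sum>j. ennreal (delta_plus Q j) * local_time Y j \<omega>) = (\<Sum>n. ennreal (max (ln (Qtot Q (Y n \<omega>))) 0))"
  by (subst suminf_mult_local_time) (simp_all add: delta_plus_def delta_def)

lemma prod_inf_max_Qtot_eq_eexp:
  assumes "nonneg_kernel Q"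
  shows "prod_inf (\<lambda>n. max (Qtot Q (Y n \<omega>)) 1) = eexp (\<Sum>j. ennreal (delta_plus Q j) * local_time Y j \<omega>)"
  unfolding suminf_delta_plus_local_time
  using assms by (intro prod_inf_max_1_eq_eexp) (simp add: nonneg_kernel_def)

lemma prod_inf_Qtot_le_eexp:
  assumes "nonneg_kernel Q" and "(\<Sum>j. ennreal (delta_plus Q j) * local_time Y j \<omega>) \<noteq> \<top>"
  shows "prod_inf (\<lambda>n. Qtot Q (Y n \<omega>)) \<le> eexp (\<Sum>j. ennreal (delta_plus Q j) * local_time Y j \<omega>)"
  unfolding prod_inf_max_Qtot_eq_eexp[OF assms(1), symmetric]
  using assms unfolding suminf_delta_plus_local_time
  by (intro prod_inf_le_prod_inf_max_1) (simp_all add: nonneg_kernel_def)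

lemma condC_iff_nn_integral_eexp:
  assumes "nonneg_kernel Q"
  shows "condC Q M X
    \<longleftrightarrow> (\<forall>i. (\<integral>\<^sup>+\<omega>. eexp (\<Sum>j. ennreal (delta_plus Q j) * local_time (X i) j \<omega>) \<partial>M i) < \<infinity>)"
  using assms by (simp add: condC_def prod_inf_max_Qtot_eq_eexp)

lemma fval_le_nn_integral_eexp:
  assumes kernel: "nonneg_kernel Q"
    and [measurable]: "\<And>n. X i n \<in> measurable (M i) (count_space UNIV)"
    and fin: "(\<integral>\<^sup>+\<omega>. eexp (\<Sum>j. ennreal (delta_plus Q j) * local_time (X i) j \<omega>) \<partial>M i) < \<infinity>"
  shows "fval Q M X i \<le> (\<integral>\<^sup>+\<omega>. eexp (\<Sum>j. ennreal (delta_plus Q j) * local_time (X i) j \<omega>) \<partial>M i)"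
proof -
  have "AE \<omega> in M i. eexp (\<Sum>j. ennreal (delta_plus Q j) * local_time (X i) j \<omega>) \<noteq> \<infinity>"
    using fin by (intro nn_integral_PInf_AE) auto
  then have "AE \<omega> in M i. prod_inf (\<lambda>n. Qtot Q (X i n \<omega>))
      \<le> eexp (\<Sum>j. ennreal (delta_plus Q j) * local_time (X i) j \<omega>)"
    by eventually_elim (simp add: prod_inf_Qtot_le_eexp[OF kernel] eexp_eq_top_iff)
  then show ?thesis
    unfolding fval_def by (rule nn_integral_mono_AE)
qed

lemma hitting_prob_tendsto_0:
  fixes Y :: "nat \<Rightarrow> nat \<Rightarrow> 'a \<Rightarrow> nat"
  assumes prob: "\<And>i. prob_space (M i)"
    and meas: "\<And>i n. Y i n \<in> measurable (M i) (count_space UNIV)"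
    and escape: "(\<lambda>i. measure (M i) {\<omega> \<in> space (M i). \<forall>n. j < Y i n \<omega>}) \<longlonglongrightarrow> 1"
  shows "(\<lambda>i. measure (M i) {\<omega> \<in> space (M i). \<exists>n. Y i n \<omega> = j}) \<longlonglongrightarrow> 0"
proof (rule tendsto_sandwich[where f = "\<lambda>_. 0"])
  have "measure (M i) {\<omega> \<in> space (M i). \<exists>n. Y i n \<omega> = j}
      \<le> 1 - measure (M i) {\<omega> \<in> space (M i). \<forall>n. j < Y i n \<omega>}" for i
  proof -
    interpret prob_space "M i"
      by (rule prob)
    note [measurable] = meas[of i]
    have "measure (M i) {\<omega> \<in> space (M i). \<exists>n. Y i n \<omega> = j} + measure (M i) {\<omega> \<in> space (M i). \<forall>n. j < Y i n \<omega>}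
        = measure (M i) ({\<omega> \<in> space (M i). \<exists>n. Y i n \<omega> = j} \<union> {\<omega> \<in> space (M i). \<forall>n. j < Y i n \<omega>})"
      by (intro finite_measure_Union[symmetric]) (measurable, measurable, force)
    also have "\<dots> \<le> 1"
      by (rule prob_le_1)
    finally show ?thesis
      by simp
  qed
  then show "\<forall>\<^sub>F i in sequentially. measure (M i) {\<omega> \<in> space (M i). \<exists>n. Y i n \<omega> = j}
      \<le> 1 - measure (M i) {\<omega> \<in> space (M i). \<forall>n. j < Y i n \<omega>}"
    by simp
  show "(\<lambda>i. 1 - measure (M i) {\<omega> \<in> space (M i). \<forall>n. j < Y i n \<omega>}) \<longlonglongrightarrow> 0"
    using tendsto_diff[OF tendsto_const escape, of 1] by simp
qed auto

lemma tendsto_suminf_mult_vanishing: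
  fixes p :: "nat \<Rightarrow> real"
  assumes p: "summable p" "\<And>j. 0 \<le> p j"
    and h: "\<And>i j. 0 \<le> h i j" "\<And>i j. h i j \<le> 1" "\<And>j. (\<lambda>i. h i j) \<longlonglongrightarrow> 0"
  shows "(\<lambda>i. \<Sum>j. p j * h i j) \<longlonglongrightarrow> 0"
proof -
  have "norm (p j * h i j) \<le> p j" for i j
    using p(2)[of j] h(1,2)[of i j] by (simp add: mult_left_le)
  then have "\<forall>\<^sub>F (j, i) in at_top \<times>\<^sub>F sequentially. norm (p j * h i j) \<le> p j"
    by (intro always_eventually) auto
  then have "(\<lambda>i. \<Sum>j. p j * h i j) \<longlonglongrightarrow> (\<Sum>j. p j * 0)"
    using p(1) by (intro tannerys_theorem[THEN conjunct2, THEN conjunct2] tendsto_mult tendsto_const h(3))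
      auto
  then show ?thesis
    by simp
qed

lemma nn_integral_eexp_local_time_le_SUP:
  assumes mf: "markov_family P M X"
  shows "(\<integral>\<^sup>+\<omega>. eexp (D * local_time (X i) j \<omega>) \<partial>M i)
       \<le> 1 + ennreal (measure (M i) {\<omega> \<in> space (M i). \<exists>n. X i n \<omega> = j})
            * (SUP k. \<integral>\<^sup>+\<omega>. eexp (D * local_time (X k) k \<omega>) \<partial>M k)"
proof -
  interpret prob_space "M i"
    by (rule markov_family_prob_space[OF mf])
  have "(\<integral>\<^sup>+\<omega>. eexp (D * local_time (X i) j \<omega>) \<partial>M i)
      \<le> 1 + ennreal (measure (M i) {\<omega> \<in> space (M i). \<exists>n. X i n \<omega> = j})
            * (\<integral>\<^sup>+\<omega>. eexp (D * local_time (X j) j \<omega>) \<partial>M j)"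
    using nn_integral_eexp_local_time_le[OF mf, where D = D and i = i and j = j]
    by (simp add: emeasure_eq_measure)
  also have "\<dots> \<le> 1 + ennreal (measure (M i) {\<omega> \<in> space (M i). \<exists>n. X i n \<omega> = j})
            * (SUP k. \<integral>\<^sup>+\<omega>. eexp (D * local_time (X k) k \<omega>) \<partial>M k)"
    by (intro add_left_mono mult_left_mono SUP_upper) auto
  finally show ?thesis .
qed

lemma suminf_ennreal_affine:
  fixes p h :: "nat \<Rightarrow> real"
  assumes p: "p sums 1" "\<And>j. 0 \<le> p j" and h: "\<And>j. 0 \<le> h j" "\<And>j. h j \<le> 1"
  shows "(\<Sum>j. ennreal (p j) * (1 + ennreal (h j) * C)) = 1 + C * ennreal (\<Sum>j. p j * h j)"
proof -
  have "summable (\<lambda>j. p j * h j)"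
    using p h by (intro summable_comparison_test'[OF sums_summable[OF p(1)], of 0]) (simp add: mult_left_le)
  then have "(\<Sum>j. ennreal (p j * h j)) = ennreal (\<Sum>j. p j * h j)"
    using p h by (intro suminf_ennreal2) auto
  moreover have "(\<Sum>j. ennreal (p j) * (1 + ennreal (h j) * C)) = (\<Sum>j. ennreal (p j) + C * ennreal (p j * h j))"
    using p h by (intro suminf_cong) (simp add: distrib_left ennreal_mult mult_ac)
  moreover have "\<dots> = (\<Sum>j. ennreal (p j)) + C * (\<Sum>j. ennreal (p j * h j))"
    by (simp add: suminf_add[symmetric] summableI)
  moreover have "(\<Sum>j. ennreal (p j)) = 1"
    using p by (rule suminf_ennreal_eq_1)
  ultimately show ?thesis
    by simp
qed

text \<open>For \<open>suminf w = 0\<close> the sum on the right is \<open>0\<close>, as division by zero yields zero.\<close>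
lemma nn_integral_eexp_suminf_local_time_le_hitting:
  fixes w :: "nat \<Rightarrow> real"
  assumes mf: "markov_family P M X" and w: "\<And>j. 0 \<le> w j" "summable w"
  shows "(\<integral>\<^sup>+\<omega>. eexp (\<Sum>j. ennreal (w j) * local_time (X i) j \<omega>) \<partial>M i)
       \<le> 1 + (SUP k. \<integral>\<^sup>+\<omega>. eexp (ennreal (suminf w) * local_time (X k) k \<omega>) \<partial>M k)
            * ennreal (\<Sum>j. w j / suminf w * measure (M i) {\<omega> \<in> space (M i). \<exists>n. X i n \<omega> = j})"
    (is "_ \<le> 1 + ?C * ennreal (\<Sum>j. w j / suminf w * ?h j)")
proof (cases "suminf w = 0")
  case True
  interpret prob_space "M i"
    by (rule markov_family_prob_space[OF mf])
  from True have "w j = 0" for j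
    using suminf_eq_zero_iff[OF w(2,1)] by simp
  then show ?thesis
    by (simp add: emeasure_space_1)
next
  case False
  note [measurable] = markov_family_measurable[OF mf]
  define p where "p j = w j / suminf w" for j
  have p: "0 \<le> p j" for j
    using w suminf_nonneg[OF w(2,1)] by (simp add: p_def)
  have "(\<integral>\<^sup>+\<omega>. eexp (\<Sum>j. ennreal (w j) * local_time (X i) j \<omega>) \<partial>M i)
      \<le> (\<Sum>j. ennreal (p j) * (\<integral>\<^sup>+\<omega>. eexp (ennreal (suminf w) * local_time (X i) j \<omega>) \<partial>M i))"
    unfolding p_def using w False suminf_nonneg[OF w(2,1)]
    by (intro nn_integral_eexp_suminf_le_weighted) auto
  also have "\<dots> \<le> (\<Sum>j. ennreal (p j) * (1 + ennreal (?h j) * ?C))"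
    by (intro suminf_le mult_left_mono nn_integral_eexp_local_time_le_SUP[OF mf]) auto
  also have "\<dots> = 1 + ?C * ennreal (\<Sum>j. p j * ?h j)"
    using sums_divide_suminf[OF w(2) False] p
    by (intro suminf_ennreal_affine) (simp_all add: p_def[abs_def] prob_space.prob_le_1[OF markov_family_prob_space[OF mf]])
  finally show ?thesis
    by (simp add: p_def)
qed

lemma limsup_fval_le_1:
  assumes kernel: "nonneg_kernel Q" and mf: "markov_family P M X"
    and summable: "summable (delta_plus Q)"
    and K_fin: "\<And>i. (\<integral>\<^sup>+\<omega>. eexp (\<Sum>j. ennreal (delta_plus Q j) * local_time (X i) j \<omega>) \<partial>M i) < \<infinity>"
    and escape: "\<forall>N. (\<lambda>i. measure (M i) {\<omega> \<in> space (M i). \<forall>n. N < X i n \<omega>}) \<longlonglongrightarrow> 1"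
    and C_fin: "(SUP i. \<integral>\<^sup>+\<omega>. eexp (ennreal (suminf (delta_plus Q)) * local_time (X i) i \<omega>) \<partial>M i) < \<infinity>"
  shows "limsup (fval Q M X) \<le> 1"
proof -
  define C where "C = (SUP i. \<integral>\<^sup>+\<omega>. eexp (ennreal (suminf (delta_plus Q)) * local_time (X i) i \<omega>) \<partial>M i)"
  define p where "p j = delta_plus Q j / suminf (delta_plus Q)" for j
  define h where "h i j = measure (M i) {\<omega> \<in> space (M i). \<exists>n. X i n \<omega> = j}" for i j
  have bound: "fval Q M X i \<le> 1 + C * ennreal (\<Sum>j. p j * h i j)" for i
  proof -
    have "fval Q M X i \<le> (\<integral>\<^sup>+\<omega>. eexp (\<Sum>j. ennreal (delta_plus Q j) * local_time (X i) j \<omega>) \<partial>M i)"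
      by (rule fval_le_nn_integral_eexp[OF kernel _ K_fin]) (rule markov_family_measurable[OF mf])
    also have "\<dots> \<le> 1 + C * ennreal (\<Sum>j. p j * h i j)"
      using nn_integral_eexp_suminf_local_time_le_hitting[OF mf delta_plus_nonneg summable, of i]
      by (simp add: C_def p_def h_def)
    finally show ?thesis .
  qed
  have "(\<lambda>i. h i j) \<longlonglongrightarrow> 0" for j
    unfolding h_def using escape
    by (intro hitting_prob_tendsto_0 markov_family_prob_space[OF mf] markov_family_measurable[OF mf])
      auto
  then have "(\<lambda>i. \<Sum>j. p j * h i j) \<longlonglongrightarrow> 0"
    unfolding p_def[abs_def] h_def
    by (intro tendsto_suminf_mult_vanishing summable_divide summable)
      (simp_all add: delta_plus_nonneg suminf_nonneg[OF summable]
        prob_space.prob_le_1[OF markov_family_prob_space[OF mf]])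
  then have "(\<lambda>i. 1 + C * ennreal (\<Sum>j. p j * h i j)) \<longlonglongrightarrow> 1 + C * ennreal 0"
    using C_fin[folded C_def] by (intro tendsto_intros) auto
  then have "limsup (\<lambda>i. 1 + C * ennreal (\<Sum>j. p j * h i j)) = 1"
    by (intro lim_imp_Limsup) simp_all
  moreover have "limsup (fval Q M X) \<le> limsup (\<lambda>i. 1 + C * ennreal (\<Sum>j. p j * h i j))"
    by (intro Limsup_mono always_eventually allI bound)
  ultimately show ?thesis
    by simp
qed

theorem proposition3:
  fixes Q :: "nat \<Rightarrow> nat \<Rightarrow> real"
    and M :: "nat \<Rightarrow> 'a measure"
    and X :: "nat \<Rightarrow> nat \<Rightarrow> 'a \<Rightarrow> nat"
  assumes kernel: "nonneg_kernel Q"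
    and irred: "irreducible_kernel Q"
    and chain: "markov_family (Pker Q) M X"
    and D_fin: "summable (delta_plus Q)"
  defines "D \<equiv> (\<Sum>j. delta_plus Q j)"
  shows "(\<forall>i. (\<integral>\<^sup>+\<omega>. eexp (\<Sum>j. ennreal (delta_plus Q j) * local_time (X i) j \<omega>) \<partial>M i)
               \<le> (SUP j. \<integral>\<^sup>+\<omega>. eexp (ennreal D * local_time (X i) j \<omega>) \<partial>M i))
      \<and> ((\<forall>i. (SUP j. \<integral>\<^sup>+\<omega>. eexp (ennreal D * local_time (X i) j \<omega>) \<partial>M i) < \<infinity>) \<longrightarrow>
            condC Q M X
          \<and> (\<forall>i. fval Q M X i \<le> (SUP j. \<integral>\<^sup>+\<omega>. eexp (ennreal D * local_time (X i) j \<omega>) \<partial>M i))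
          \<and> (((\<forall>N. (\<lambda>i. measure (M i) {\<omega> \<in> space (M i). \<forall>n. N < X i n \<omega>}) \<longlonglongrightarrow> 1)
               \<and> (SUP i. \<integral>\<^sup>+\<omega>. eexp (ennreal D * local_time (X i) i \<omega>) \<partial>M i) < \<infinity>)
             \<longrightarrow> limsup (fval Q M X) \<le> 1))"
proof -
  let ?K = "\<lambda>i. \<integral>\<^sup>+\<omega>. eexp (\<Sum>j. ennreal (delta_plus Q j) * local_time (X i) j \<omega>) \<partial>M i"
  let ?S = "\<lambda>i. SUP j. \<integral>\<^sup>+\<omega>. eexp (ennreal D * local_time (X i) j \<omega>) \<partial>M i"
  note [measurable] = markov_family_measurable[OF chain]
  have K_le_S: "?K i \<le> ?S i" for i
    unfolding D_def by (intro nn_integral_eexp_suminf_le_SUP delta_plus_nonneg D_fin) measurable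
  moreover have "condC Q M X" and "fval Q M X i \<le> ?S i"
    and "(\<forall>N. (\<lambda>i. measure (M i) {\<omega> \<in> space (M i). \<forall>n. N < X i n \<omega>}) \<longlonglongrightarrow> 1)
        \<Longrightarrow> (SUP i. \<integral>\<^sup>+\<omega>. eexp (ennreal D * local_time (X i) i \<omega>) \<partial>M i) < \<infinity>
        \<Longrightarrow> limsup (fval Q M X) \<le> 1"
    if S_fin: "\<forall>i. ?S i < \<infinity>" for i
  proof -
    have K_fin: "?K k < \<infinity>" for k
      using K_le_S[of k] S_fin by (simp add: le_less_trans)
    then show "condC Q M X"
      by (simp add: condC_iff_nn_integral_eexp[OF kernel])
    show "fval Q M X i \<le> ?S i"
      using fval_le_nn_integral_eexp[where M = M and X = X, OF kernel _ K_fin[of i]] K_le_S[of i]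
      by (meson order_trans markov_family_measurable[OF chain])
    show "limsup (fval Q M X) \<le> 1"
      if "\<forall>N. (\<lambda>i. measure (M i) {\<omega> \<in> space (M i). \<forall>n. N < X i n \<omega>}) \<longlonglongrightarrow> 1"
        and "(SUP i. \<integral>\<^sup>+\<omega>. eexp (ennreal D * local_time (X i) i \<omega>) \<partial>M i) < \<infinity>"
      using that unfolding D_def by (intro limsup_fval_le_1[OF kernel chain D_fin K_fin])
  qed
  ultimately show ?thesis
    by blast
qed

end
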